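(* Let $G$ be a connected saturated graph with $|E(G)| \leq |V(G)|$ and $2 \leq mp(G) \leq 3$. Then: (1) if $mp(G)=2$, then $G = K_{1,\Delta}$ for some $\Delta\ge 1$, and if $\Delta \geq 2$ then $mp(G+e)=3$ for every pair $e$ of non-adjacent vertices of $G$; (2) if $mp(G)=3$, then $G = K_3$.
   Context: All graphs are finite and simple. A degree monotone path in a graph $G$ is a path $v_1v_2\ldots v_m$ such that $\deg(v_1)\le \cdots\le \deg(v_m)$ or $\deg(v_1)\ge \cdots\ge \deg(v_m)$; its length is its number of vertices. $mp(G)$ denotes the maximum length of a degree monotone path in $G$. A graph $G$ is saturated if $mp(G+e)>mp(G)$ for every pair $e$ of non-adjacent vertices of $G$, where $G+e$ is $G$ with the edge $e$ added (complete graphs are saturated vacuously). *)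

theory Defs
  imports Main
begin

definition simple_graph :: "'a set \<Rightarrow> 'a set set \<Rightarrow> bool" where
  "simple_graph V E \<longleftrightarrow> finite V \<and> (\<forall>e\<in>E. e \<subseteq> V \<and> card e = 2)"

definition adj :: "'a set set \<Rightarrow> 'a \<Rightarrow> 'a \<Rightarrow> bool" where
  "adj E u v \<longleftrightarrow> {u, v} \<in> E"

definition deg :: "'a set \<Rightarrow> 'a set set \<Rightarrow> 'a \<Rightarrow> nat" where
  "deg V E v = card {u \<in> V. adj E u v}"

definition is_path :: "'a set \<Rightarrow> 'a set set \<Rightarrow> 'a list \<Rightarrow> bool" where
  "is_path V E p \<longleftrightarrow> set p \<subseteq> V \<and> distinct p \<and> successively (adj E) p"

definition deg_monotone :: "'a set \<Rightarrow> 'a set set \<Rightarrow> 'a list \<Rightarrow> bool" where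
  "deg_monotone V E p \<longleftrightarrow> sorted (map (deg V E) p) \<or> sorted (rev (map (deg V E) p))"

text \<open>Maximum number of vertices of a degree monotone path (the empty path counts, length 0).\<close>
definition mp :: "'a set \<Rightarrow> 'a set set \<Rightarrow> nat" where
  "mp V E = Max {length p | p. is_path V E p \<and> deg_monotone V E p}"

definition connected :: "'a set \<Rightarrow> 'a set set \<Rightarrow> bool" where
  "connected V E \<longleftrightarrow> V \<noteq> {} \<and>
     (\<forall>u\<in>V. \<forall>v\<in>V. \<exists>p. is_path V E p \<and> p \<noteq> [] \<and> hd p = u \<and> last p = v)"

definition saturated :: "'a set \<Rightarrow> 'a set set \<Rightarrow> bool" where
  "saturated V E \<longleftrightarrow>
     (\<forall>u\<in>V. \<forall>v\<in>V. u \<noteq> v \<and> {u, v} \<notin> E \<longrightarrow> mp V (insert {u, v} E) > mp V E)"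

definition is_star :: "'a set \<Rightarrow> 'a set set \<Rightarrow> nat \<Rightarrow> bool" where
  "is_star V E d \<longleftrightarrow> (\<exists>c\<in>V. card (V - {c}) = d \<and> E = {{c, l} | l. l \<in> V - {c}})"

definition is_K3 :: "'a set \<Rightarrow> 'a set set \<Rightarrow> bool" where
  "is_K3 V E \<longleftrightarrow> card V = 3 \<and> E = {e. e \<subseteq> V \<and> card e = 2}"

end

theory Submission
  imports Defs
begin

text \<open>If mp G = 2, the middle vertex of every path on three vertices is a strict local
  extremum of the degree. Together with |E| \<le> |V| this yields a leaf v, with neighbour q say,
  and an edge avoiding q would produce a second local maximum b; joining v to b creates no
  monotone path on three vertices, against saturation. So G is a star, and joining two leaves
  of a star with at least two leaves gives mp = 3.

  If mp G = 3, the neighbour q of a leaf has degree at least 3, and saturation forces every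
  leaf to be adjacent to every vertex of maximum degree. Hence q is the unique vertex of
  maximum degree and carries all leaves; two leaves at q can be joined without creating a
  monotone path on four vertices, and with a single leaf the degree count leaves only the paw,
  which admits such an edge as well. So there is no leaf, |E| \<le> |V| makes G 2-regular, and a
  cycle longer than a triangle contains a monotone path on four vertices.\<close>

lemma adj_commute: "adj E u v \<longleftrightarrow> adj E v u"
  by (simp add: adj_def insert_commute)

lemma adj_irrefl: "simple_graph V E \<Longrightarrow> \<not> adj E u u"
  by (auto simp: adj_def simple_graph_def)

lemma adj_in_vertices: "simple_graph V E \<Longrightarrow> adj E u v \<Longrightarrow> u \<in> V \<and> v \<in> V"
  by (auto simp: adj_def simple_graph_def)

lemma adj_insert_edge:
  "adj (insert {u,x} E) a b \<longleftrightarrow> adj E a b \<or> (a = u \<and> b = x) \<or> (a = x \<and> b = u)"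
  by (auto simp: adj_def doubleton_eq_iff)

lemma simple_graph_insert_edge:
  "simple_graph V E \<Longrightarrow> u \<in> V \<Longrightarrow> x \<in> V \<Longrightarrow> u \<noteq> x \<Longrightarrow> simple_graph V (insert {u,x} E)"
  by (auto simp: simple_graph_def)

lemma finite_edges: "simple_graph V E \<Longrightarrow> finite E"
  unfolding simple_graph_def by (meson Pow_iff finite_Pow_iff finite_subset subsetI)

lemma deg_insert_edge:
  assumes s: "simple_graph V E" and "u \<in> V" "x \<in> V" "u \<noteq> x" "\<not> adj E u x"
  shows "deg V (insert {u,x} E) y = deg V E y + (if y = u \<or> y = x then 1 else 0)"
proof -
  let ?N = "{w\<in>V. adj E w y}"
  have fin: "finite ?N" using s by (simp add: simple_graph_def)
  have new: "\<not> adj E x u" "\<not> adj E u x" using assms(5) by (auto simp: adj_def insert_commute)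
  consider "y = u" | "y = x" | "y \<noteq> u" "y \<noteq> x" by blast
  then show ?thesis
  proof cases
    case 1
    then have "{w\<in>V. adj (insert {u,x} E) w y} = insert x ?N"
      using assms by (auto simp: adj_insert_edge)
    then show ?thesis using 1 fin new by (simp add: deg_def)
  next
    case 2
    then have "{w\<in>V. adj (insert {u,x} E) w y} = insert u ?N"
      using assms by (auto simp: adj_insert_edge)
    then show ?thesis using 2 fin new \<open>u \<noteq> x\<close> by (simp add: deg_def)
  next
    case 3
    then have "{w\<in>V. adj (insert {u,x} E) w y} = ?N" by (auto simp: adj_insert_edge)
    then show ?thesis using 3 by (simp add: deg_def)
  qed
qed

lemma deg_ge_card_neighbours:
  "simple_graph V E \<Longrightarrow> A \<subseteq> V \<Longrightarrow> (\<And>y. y \<in> A \<Longrightarrow> adj E v y) \<Longrightarrow> card A \<le> deg V E v"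
  unfolding deg_def using adj_commute[of E v] by (intro card_mono) (auto simp: simple_graph_def)

lemma adj_iff_mem_neighbours:
  "simple_graph V E \<Longrightarrow> adj E v y \<longleftrightarrow> y \<in> {u\<in>V. adj E u v}"
  using adj_in_vertices[of V E v y] adj_commute[of E v y] by blast

lemma deg_eq_1E:
  assumes "simple_graph V E" and "deg V E v = 1"
  obtains q where "q \<in> V" "\<And>y. adj E v y \<longleftrightarrow> y = q"
proof -
  obtain q where "{u\<in>V. adj E u v} = {q}"
    using assms(2) unfolding deg_def by (rule card_1_singletonE)
  then show ?thesis using that adj_iff_mem_neighbours[OF assms(1)] by blast
qed

lemma deg_eq_2E:
  assumes "simple_graph V E" and "deg V E v = 2"
  obtains a b where "a \<in> V" "b \<in> V" "a \<noteq> b" "\<And>y. adj E v y \<longleftrightarrow> y = a \<or> y = b"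
proof -
  obtain a b where "{u\<in>V. adj E u v} = {a,b}" "a \<noteq> b"
    using assms(2) by (auto simp: deg_def card_2_iff)
  then show ?thesis using that adj_iff_mem_neighbours[OF assms(1)] by blast
qed

lemma deg_eq_2_otherE:
  assumes "simple_graph V E" and "deg V E v = 2" and "adj E v a"
  obtains b where "b \<noteq> a" "\<And>y. adj E v y \<longleftrightarrow> y = a \<or> y = b"
proof -
  obtain x y where "x \<noteq> y" "\<And>w. adj E v w \<longleftrightarrow> w = x \<or> w = y"
    using deg_eq_2E[OF assms(1,2)] by metis
  then show ?thesis using that assms(3) by metis
qed

lemma deg_eq_3E:
  assumes "simple_graph V E" and "deg V E v = 3"
  obtains a b c where "a \<in> V" "b \<in> V" "c \<in> V" "a \<noteq> b" "b \<noteq> c" "a \<noteq> c"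
    "\<And>y. adj E v y \<longleftrightarrow> y = a \<or> y = b \<or> y = c"
proof -
  obtain a b c where "{u\<in>V. adj E u v} = {a,b,c}" "a \<noteq> b" "b \<noteq> c" "a \<noteq> c"
    using assms(2) by (auto simp: deg_def card_3_iff)
  then show ?thesis using that adj_iff_mem_neighbours[OF assms(1)] by blast
qed

lemma deg_ge_2E:
  assumes "simple_graph V E" and "deg V E v \<ge> 2"
  obtains b where "adj E v b" "b \<noteq> a"
proof -
  have "\<not> {u\<in>V. adj E u v} \<subseteq> {a}"
    using assms card_mono[of "{a}" "{u\<in>V. adj E u v}"] by (auto simp: deg_def)
  then show ?thesis using that adj_commute[of E v] by auto
qed

lemma deg_eq_card_incident_edges:
  assumes s: "simple_graph V E" and y: "y \<in> V"
  shows "deg V E y = card {e\<in>E. y \<in> e}"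
  unfolding deg_def
proof (rule bij_betw_same_card[of "\<lambda>w. {w, y}"], rule bij_betwI')
  fix e assume e: "e \<in> {e\<in>E. y \<in> e}"
  then obtain a b where "e = {a,b}" "a \<noteq> b" "{a,b} \<subseteq> V"
    using s by (auto simp: simple_graph_def card_2_iff)
  then show "\<exists>w\<in>{w\<in>V. adj E w y}. e = {w, y}"
    using e by (cases "y = a") (auto simp: adj_def insert_commute)
qed (use adj_irrefl[OF s] in \<open>auto simp: adj_def doubleton_eq_iff\<close>)

lemma degree_sum_formula:
  assumes s: "simple_graph V E"
  shows "(\<Sum>y\<in>V. deg V E y) = 2 * card E"
proof -
  have fV: "finite V" using s by (simp add: simple_graph_def)
  have "(\<Sum>y\<in>V. deg V E y) = (\<Sum>y\<in>V. \<Sum>e\<in>E. if y \<in> e then 1 else 0)"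
    using deg_eq_card_incident_edges[OF s] finite_edges[OF s]
    by (intro sum.cong) (simp_all add: sum.If_cases Int_def)
  also have "\<dots> = (\<Sum>e\<in>E. \<Sum>y\<in>V. if y \<in> e then 1 else 0)" by (rule sum.swap)
  also have "\<dots> = (\<Sum>e\<in>E. card (V \<inter> e))" using fV by (simp add: sum.If_cases)
  also have "\<dots> = (\<Sum>e\<in>E. 2)"
    using s by (intro sum.cong) (auto simp: simple_graph_def Int_absorb1)
  finally show ?thesis by simp
qed

lemma degree_eq_lower_bound:
  assumes s: "simple_graph V E" and "card E \<le> card V" and "sum f V = 2 * card V"
    and le: "\<And>y. y \<in> V \<Longrightarrow> f y \<le> deg V E y" and "y \<in> V"
  shows "deg V E y = f y"
proof -
  have "sum (deg V E) V \<le> sum f V" using degree_sum_formula[OF s] assms(2,3) by simp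
  then have "sum f V = sum (deg V E) V" using sum_mono[of V f "deg V E"] le by simp
  then show ?thesis
    using sum_mono_inv[of f V "deg V E", OF _ le \<open>y \<in> V\<close>] s by (simp add: simple_graph_def)
qed

lemma is_path_rev: "is_path V E (rev p) \<longleftrightarrow> is_path V E p"
  unfolding is_path_def using adj_commute[of E] by simp

lemma deg_monotone_rev: "deg_monotone V E (rev p) \<longleftrightarrow> deg_monotone V E p"
  unfolding deg_monotone_def by (auto simp flip: rev_map)

lemma is_path_take: "is_path V E p \<Longrightarrow> is_path V E (take k p)"
  unfolding is_path_def
  by (metis append_take_drop_id distinct_append set_take_subset order_trans successively_append_iff)

lemma deg_monotone_take: "deg_monotone V E p \<Longrightarrow> deg_monotone V E (take k p)"
  unfolding deg_monotone_def by (auto simp: sorted_wrt_rev simp flip: take_map)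

lemma is_path_length_le: "simple_graph V E \<Longrightarrow> is_path V E p \<Longrightarrow> length p \<le> card V"
  unfolding is_path_def simple_graph_def by (metis card_mono distinct_card)

lemma finite_monotone_path_lengths:
  "simple_graph V E \<Longrightarrow> finite {length p | p. is_path V E p \<and> deg_monotone V E p}"
  by (rule finite_subset[of _ "{..card V}"]) (auto dest: is_path_length_le)

lemma mp_ge:
  "simple_graph V E \<Longrightarrow> is_path V E p \<Longrightarrow> deg_monotone V E p \<Longrightarrow> length p \<le> mp V E"
  unfolding mp_def by (rule Max_ge[OF finite_monotone_path_lengths]) auto

lemma mp_le_iff:
  assumes s: "simple_graph V E"
  shows "mp V E \<le> k \<longleftrightarrow> \<not> (\<exists>p. is_path V E p \<and> deg_monotone V E p \<and> length p = Suc k)"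
proof
  assume "mp V E \<le> k"
  then show "\<not> (\<exists>p. is_path V E p \<and> deg_monotone V E p \<and> length p = Suc k)"
    using mp_ge[OF s] by fastforce
next
  assume none: "\<not> (\<exists>p. is_path V E p \<and> deg_monotone V E p \<and> length p = Suc k)"
  have "length p \<le> k" if "is_path V E p" "deg_monotone V E p" for p
  proof (rule ccontr)
    assume "\<not> length p \<le> k"
    then have "length (take (Suc k) p) = Suc k" by simp
    then show False using none is_path_take[OF that(1)] deg_monotone_take[OF that(2)] by blast
  qed
  moreover have "is_path V E [] \<and> deg_monotone V E []"
    by (simp add: is_path_def deg_monotone_def)
  ultimately show "mp V E \<le> k"
    unfolding mp_def using finite_monotone_path_lengths[OF s] by (subst Max_le_iff) auto
qed

lemma mp_le_card: "simple_graph V E \<Longrightarrow> mp V E \<le> card V"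
  using mp_le_iff[of V E "card V"] is_path_length_le[of V E] by fastforce

lemma is_path_3:
  "is_path V E [a,b,c] \<longleftrightarrow> a \<in> V \<and> b \<in> V \<and> c \<in> V \<and> a \<noteq> b \<and> a \<noteq> c \<and> b \<noteq> c \<and>
     adj E a b \<and> adj E b c"
  by (auto simp: is_path_def)

lemma is_path_4:
  "is_path V E [a,b,c,d] \<longleftrightarrow> a \<in> V \<and> b \<in> V \<and> c \<in> V \<and> d \<in> V \<and>
     a \<noteq> b \<and> a \<noteq> c \<and> a \<noteq> d \<and> b \<noteq> c \<and> b \<noteq> d \<and> c \<noteq> d \<and>
     adj E a b \<and> adj E b c \<and> adj E c d"
  by (auto simp: is_path_def)

lemma deg_monotone_3:
  "deg_monotone V E [a,b,c] \<longleftrightarrow>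
     deg V E a \<le> deg V E b \<and> deg V E b \<le> deg V E c \<or>
     deg V E a \<ge> deg V E b \<and> deg V E b \<ge> deg V E c"
  unfolding deg_monotone_def by auto

lemma deg_monotone_4:
  "deg_monotone V E [a,b,c,d] \<longleftrightarrow>
     deg V E a \<le> deg V E b \<and> deg V E b \<le> deg V E c \<and> deg V E c \<le> deg V E d \<or>
     deg V E a \<ge> deg V E b \<and> deg V E b \<ge> deg V E c \<and> deg V E c \<ge> deg V E d"
  unfolding deg_monotone_def by auto

lemma mp_le_2I:
  assumes "simple_graph V E"
    and "\<And>a b c. is_path V E [a,b,c] \<Longrightarrow> deg_monotone V E [a,b,c] \<Longrightarrow> False"
  shows "mp V E \<le> 2"
  using assms by (subst mp_le_iff) (auto simp: numeral_eq_Suc length_Suc_conv)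

lemma mp_le_3I:
  assumes "simple_graph V E"
    and "\<And>a b c d. is_path V E [a,b,c,d] \<Longrightarrow> deg_monotone V E [a,b,c,d] \<Longrightarrow> False"
  shows "mp V E \<le> 3"
  using assms by (subst mp_le_iff) (auto simp: numeral_eq_Suc length_Suc_conv)

lemma mp_le_2D:
  "simple_graph V E \<Longrightarrow> mp V E \<le> 2 \<Longrightarrow> is_path V E [a,b,c] \<Longrightarrow> \<not> deg_monotone V E [a,b,c]"
  using mp_ge[of V E "[a,b,c]"] by auto

lemma mp_le_3D:
  "simple_graph V E \<Longrightarrow> mp V E \<le> 3 \<Longrightarrow> is_path V E [a,b,c,d] \<Longrightarrow> \<not> deg_monotone V E [a,b,c,d]"
  using mp_ge[of V E "[a,b,c,d]"] by auto

lemma saturated_mp_insert_edge: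
  "saturated V E \<Longrightarrow> u \<in> V \<Longrightarrow> x \<in> V \<Longrightarrow> u \<noteq> x \<Longrightarrow> \<not> adj E u x \<Longrightarrow>
     mp V E < mp V (insert {u,x} E)"
  unfolding saturated_def adj_def by blast

lemma monotone_path_avoiding_insert_edge:
  assumes "simple_graph V E" and "u \<in> V" "x \<in> V" "u \<noteq> x" "\<not> adj E u x"
    and p: "is_path V (insert {u,x} E) p" "deg_monotone V (insert {u,x} E) p"
    and avoid: "u \<notin> set p" "x \<notin> set p"
  shows "is_path V E p \<and> deg_monotone V E p"
proof
  have "successively (adj E) p"
    using p(1) avoid unfolding is_path_def
    by (induction p rule: induct_list012) (auto simp: adj_insert_edge)
  then show "is_path V E p" using p(1) by (simp add: is_path_def)
  have "map (deg V (insert {u,x} E)) p = map (deg V E) p"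
    using avoid deg_insert_edge[OF assms(1-5)] by (intro map_cong) auto
  then show "deg_monotone V E p" using p(2) unfolding deg_monotone_def by metis
qed

lemma successively_adj_closed:
  assumes "successively (adj E) p" "p \<noteq> []" "hd p \<in> S" "\<And>a b. a \<in> S \<Longrightarrow> adj E a b \<Longrightarrow> b \<in> S"
  shows "set p \<subseteq> S"
  using assms by (induction p rule: induct_list012) auto

lemma connected_closed_superset:
  assumes c: "connected V E" and "u \<in> S" "u \<in> V" and cl: "\<And>a b. a \<in> S \<Longrightarrow> adj E a b \<Longrightarrow> b \<in> S"
  shows "V \<subseteq> S"
proof
  fix w assume "w \<in> V"
  then obtain p where p: "is_path V E p" "p \<noteq> []" "hd p = u" "last p = w"
    using c assms(3) unfolding connected_def by blast
  then have "set p \<subseteq> S"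
    using successively_adj_closed[of E p S] assms(2) cl by (auto simp: is_path_def)
  then show "w \<in> S" using p by auto
qed

lemma connected_deg_pos:
  assumes s: "simple_graph V E" and c: "connected V E" and "card V \<ge> 2" and "y \<in> V"
  shows "deg V E y \<ge> 1"
proof (rule ccontr)
  assume "\<not> deg V E y \<ge> 1"
  then have "card {u\<in>V. adj E u y} = 0" by (simp add: deg_def)
  then have "{u\<in>V. adj E u y} = {}" using s by (simp add: simple_graph_def)
  then have "\<not> adj E y b" for b using adj_iff_mem_neighbours[OF s, of y b] by blast
  then have "V \<subseteq> {y}" using connected_closed_superset[OF c, of y "{y}"] assms(4) by auto
  then show False using assms(3) card_mono[of "{y}" V] by simp
qed

lemma adj_deg_pos:
  assumes "simple_graph V E" "adj E a b"
  shows "deg V E a \<ge> 1"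
proof -
  have "card {b} \<le> deg V E a"
    using adj_in_vertices[OF assms] assms(2) by (intro deg_ge_card_neighbours[OF assms(1)]) auto
  then show ?thesis by simp
qed

lemma leaf_or_2_regular:
  assumes s: "simple_graph V E" and c: "connected V E" and "card E \<le> card V" and "card V \<ge> 2"
  shows "(\<exists>v\<in>V. deg V E v = 1) \<or> (\<forall>y\<in>V. deg V E y = 2)"
proof (cases "\<exists>v\<in>V. deg V E v = 1")
  case False
  then have "2 \<le> deg V E y" if "y \<in> V" for y
    using connected_deg_pos[OF s c assms(4) that] that by fastforce
  then show ?thesis
    using degree_eq_lower_bound[OF s assms(3), of "\<lambda>_. 2"] by simp
qed simp

text \<open>With at most as many edges as vertices the degree sum is at most 2|V|, and a unique
  leaf v together with a vertex q of degree at least 3 already uses up all of it.\<close>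

lemma degrees_unique_leaf:
  assumes s: "simple_graph V E" and c: "connected V E" and "card E \<le> card V"
    and vV: "v \<in> V" and dv: "deg V E v = 1" and leaf: "\<And>w. w \<in> V \<Longrightarrow> deg V E w = 1 \<Longrightarrow> w = v"
    and qV: "q \<in> V" and q3: "deg V E q \<ge> 3"
  shows "deg V E q = 3" and "\<And>y. y \<in> V \<Longrightarrow> y \<noteq> v \<Longrightarrow> y \<noteq> q \<Longrightarrow> deg V E y = 2"
proof -
  define f where "f y = (if y = v then 1 else if y = q then 3 else 2::nat)" for y
  have fV: "finite V" using s by (simp add: simple_graph_def)
  have vq: "v \<noteq> q" using dv q3 by auto
  then have n2: "card V \<ge> 2" using vV qV fV card_mono[of V "{v,q}"] by simp
  have "f y \<le> deg V E y" if "y \<in> V" for y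
  proof (cases "y = v \<or> y = q")
    case False
    then have "deg V E y \<noteq> 1" using leaf that by blast
    then show ?thesis using connected_deg_pos[OF s c n2 that] False by (simp add: f_def)
  qed (use dv q3 in \<open>auto simp: f_def\<close>)
  moreover have "sum f V = 2 * card V"
  proof -
    have "sum f V = f v + f q + sum f (V - {v} - {q})"
      using fV vV qV vq by (simp add: sum.remove[of V v] sum.remove[of "V - {v}" q])
    also have "\<dots> = 4 + 2 * (card V - 2)"
      using fV vV qV vq by (simp add: f_def card_Diff_singleton_if)
    finally show ?thesis using n2 by simp
  qed
  ultimately have "deg V E y = f y" if "y \<in> V" for y
    using degree_eq_lower_bound[OF s assms(3)] that by blast
  then show "deg V E q = 3" and "\<And>y. y \<in> V \<Longrightarrow> y \<noteq> v \<Longrightarrow> y \<noteq> q \<Longrightarrow> deg V E y = 2"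
    using qV vq by (auto simp: f_def)
qed

lemma star_adj:
  "E = {{c,l} | l. l \<in> V - {c}} \<Longrightarrow>
     adj E a b \<longleftrightarrow> (a = c \<and> b \<in> V - {c}) \<or> (b = c \<and> a \<in> V - {c})"
  unfolding adj_def by (auto simp: doubleton_eq_iff)

lemma star_deg:
  assumes "E = {{c,l} | l. l \<in> V - {c}}" and "c \<in> V"
  shows "deg V E a = (if a = c then card (V - {c}) else if a \<in> V then 1 else 0)"
proof -
  have "{x\<in>V. adj E x a} = (if a = c then V - {c} else if a \<in> V then {c} else {})"
    unfolding star_adj[OF assms(1)] using assms(2) by auto
  then show ?thesis unfolding deg_def by simp
qed

text \<open>Joining two leaves u, w of a star with centre c creates the monotone path u, w, c. Only
  c, u, w have degree greater than 1 afterwards, so they supply the inner vertices of any path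
  on four vertices, and along such a path the degrees 1, 2, 2 and at least 3 never come in
  monotone order.\<close>

lemma star_insert_edge_mp:
  assumes s: "simple_graph V E" and cV: "c \<in> V" and star: "E = {{c,l} | l. l \<in> V - {c}}"
    and d: "card (V - {c}) \<ge> 2" and "u \<in> V" "w \<in> V" "u \<noteq> w" "\<not> adj E u w"
  shows "mp V (insert {u,w} E) = 3"
proof -
  let ?E = "insert {u,w} E"
  have uc: "u \<noteq> c" and wc: "w \<noteq> c" using assms(5-8) unfolding star_adj[OF star] by auto
  have s': "simple_graph V ?E" using simple_graph_insert_edge[OF s assms(5-7)] .
  have D': "deg V ?E a = (if a = c then card (V - {c}) else if a = u \<or> a = w then 2 else 1)"
    if "a \<in> V" for a
    using that deg_insert_edge[OF s assms(5-8)] star_deg[OF star cV] uc wc by auto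
  have A': "adj ?E a b \<longleftrightarrow> (a = c \<and> b \<in> V - {c}) \<or> (b = c \<and> a \<in> V - {c}) \<or>
      (a = u \<and> b = w) \<or> (a = w \<and> b = u)" for a b
    by (simp add: adj_insert_edge star_adj[OF star])
  have "is_path V ?E [u,w,c]" using A' assms(5-7) cV uc wc by (simp add: is_path_3)
  moreover have "deg_monotone V ?E [u,w,c]"
    using D' assms(5,6) cV uc wc d by (simp add: deg_monotone_3)
  ultimately have "3 \<le> mp V ?E" using mp_ge[OF s', of "[u,w,c]"] by simp
  moreover have "mp V ?E \<le> 3"
  proof (rule mp_le_3I[OF s'])
    fix x y z t assume P: "is_path V ?E [x,y,z,t]" and M: "deg_monotone V ?E [x,y,z,t]"
    then have "card {x,y,z,t} \<le> card V"
      using s by (intro card_mono) (auto simp: simple_graph_def is_path_4)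
    then have d3: "card (V - {c}) \<ge> 3"
      using P d cV s by (auto simp: is_path_4 simple_graph_def card_Diff_singleton_if)
    have "y \<in> {c,u,w}" "z \<in> {c,u,w}" using P by (auto simp: is_path_4 A')
    then show False using P M D' d3 uc wc by (auto simp: is_path_4 deg_monotone_4 A')
  qed
  ultimately show ?thesis by simp
qed

lemma connected_all_edges_through_is_star:
  assumes s: "simple_graph V E" and c: "connected V E" and "card V \<ge> 2" and "q \<in> V"
    and through: "\<And>a b. adj E a b \<Longrightarrow> a = q \<or> b = q"
  shows "E = {{q,l} | l. l \<in> V - {q}}"
proof
  show "E \<subseteq> {{q,l} | l. l \<in> V - {q}}"
  proof
    fix e assume "e \<in> E"
    moreover obtain a b where "e = {a,b}" "a \<noteq> b" "{a,b} \<subseteq> V"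
      using s \<open>e \<in> E\<close> by (auto simp: simple_graph_def card_2_iff)
    ultimately show "e \<in> {{q,l} | l. l \<in> V - {q}}"
      using through[of a b] by (auto simp: adj_def insert_commute)
  qed
  show "{{q,l} | l. l \<in> V - {q}} \<subseteq> E"
  proof
    fix e assume "e \<in> {{q,l} | l. l \<in> V - {q}}"
    then obtain l where l: "e = {q,l}" "l \<in> V" "l \<noteq> q" by auto
    have "{u\<in>V. adj E u l} \<noteq> {}"
      using connected_deg_pos[OF s c assms(3) l(2)] unfolding deg_def
      by (metis card.empty not_one_le_zero)
    then obtain w where "adj E w l" by auto
    then have "adj E q l" using through[of w l] l(3) adj_commute[of E w] by auto
    then show "e \<in> E" using l by (simp add: adj_def)
  qed
qed

lemma mp2_strict_local_extremum:
  assumes s: "simple_graph V E" and "mp V E \<le> 2" and "adj E a b" "adj E b c" "a \<noteq> c"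
  shows "deg V E a < deg V E b \<and> deg V E c < deg V E b \<or>
         deg V E b < deg V E a \<and> deg V E b < deg V E c"
proof -
  have "is_path V E [a,b,c]"
    using assms adj_in_vertices[OF s] adj_irrefl[OF s] by (auto simp: is_path_3)
  then have "\<not> deg_monotone V E [a,b,c]" using mp_le_2D[OF s assms(2)] by blast
  then show ?thesis unfolding deg_monotone_3 by linarith
qed

lemma mp2_local_max:
  assumes s: "simple_graph V E" and "mp V E \<le> 2" and "adj E a b" "deg V E a < deg V E b"
    and "adj E b y"
  shows "deg V E y < deg V E b"
  using mp2_strict_local_extremum[OF s assms(2,3,5)] assms(4) by (cases "y = a") auto

lemma mp2_has_leaf:
  assumes s: "simple_graph V E" and c: "connected V E" and "card E \<le> card V" and "mp V E = 2"
  shows "\<exists>v\<in>V. deg V E v = 1"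
proof (rule ccontr)
  assume "\<not> (\<exists>v\<in>V. deg V E v = 1)"
  moreover have "card V \<ge> 2" using mp_le_card[OF s] assms(4) by simp
  ultimately have reg: "\<forall>y\<in>V. deg V E y = 2" using leaf_or_2_regular[OF s c assms(3)] by blast
  obtain a where aV: "a \<in> V" using \<open>card V \<ge> 2\<close> by fastforce
  then obtain x y where "x \<noteq> y" "\<And>w. adj E a w \<longleftrightarrow> w = x \<or> w = y"
    using deg_eq_2E[OF s] reg by metis
  then show False
    using mp2_strict_local_extremum[OF s _ _, of x a y] assms(4) reg adj_commute[of E a x]
      adj_in_vertices[OF s, of a] aV by auto
qed

lemma mp2_adjacent_degrees_differ:
  assumes s: "simple_graph V E" and c: "connected V E" and "card V \<ge> 3" and "mp V E \<le> 2"
    and ab: "adj E a b"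
  shows "deg V E a \<noteq> deg V E b"
proof
  assume eq: "deg V E a = deg V E b"
  show False
  proof (cases "deg V E b \<ge> 2")
    case True
    then obtain c' where "adj E b c'" "c' \<noteq> a" using deg_ge_2E[OF s] by blast
    then show False using mp2_strict_local_extremum[OF s assms(4) ab] eq by auto
  next
    case False
    then have "deg V E a = 1" "deg V E b = 1"
      using eq adj_deg_pos[OF s ab] by auto
    then obtain a' b' where "\<And>y. adj E a y \<longleftrightarrow> y = a'" "\<And>y. adj E b y \<longleftrightarrow> y = b'"
      using deg_eq_1E[OF s] by metis
    then have "\<And>x y. x \<in> {a,b} \<Longrightarrow> adj E x y \<Longrightarrow> y \<in> {a,b}"
      using ab adj_commute[of E a b] by auto
    then have "V \<subseteq> {a,b}"
      using connected_closed_superset[OF c, of a "{a,b}"] adj_in_vertices[OF s ab] by blast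
    then show False
      using assms(3) card_mono[of "{a,b}" V] by (simp add: card_insert_if split: if_splits)
  qed
qed

text \<open>If q had degree 1 or 2, connectivity would confine the graph to v, q or to a path
  v, q, r (r is a leaf because q, having larger degree than v, is a local maximum), leaving no
  room for an edge avoiding q.\<close>

lemma mp2_leaf_neighbour_deg_ge_3:
  assumes s: "simple_graph V E" and c: "connected V E" and "mp V E \<le> 2"
    and vq: "\<And>y. adj E v y \<longleftrightarrow> y = q" and dv: "deg V E v = 1"
    and ab: "adj E a b" "a \<noteq> q" "b \<noteq> q"
  shows "deg V E q \<ge> 3"
proof -
  have qv: "adj E q v" using vq[of q] adj_commute[of E v q] by simp
  have av: "a \<noteq> v" "b \<noteq> v"
    using ab vq adj_commute[of E a b] by auto
  have closed: False if "\<And>x y. x \<in> S \<Longrightarrow> adj E x y \<Longrightarrow> y \<in> S" "v \<in> S" "S \<subseteq> {v,q} \<union> R"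
    "\<And>x y. x \<in> R \<Longrightarrow> adj E x y \<Longrightarrow> y = q" for S R
  proof -
    have "V \<subseteq> S"
      using connected_closed_superset[OF c, of v S] that(1,2) adj_in_vertices[OF s qv] by blast
    then have "a \<in> {v,q} \<union> R" "b \<in> {v,q} \<union> R"
      using adj_in_vertices[OF s ab(1)] that(3) by auto
    then show False using ab av that(4)[of a b] by auto
  qed
  have "deg V E q \<noteq> 1"
  proof
    assume "deg V E q = 1"
    then obtain q' where "\<And>y. adj E q y \<longleftrightarrow> y = q'" using deg_eq_1E[OF s] by metis
    then show False using closed[of "{v,q}" "{}"] vq qv by auto
  qed
  moreover have "deg V E q \<noteq> 2"
  proof
    assume dq: "deg V E q = 2"
    then obtain r where qn: "\<And>y. adj E q y \<longleftrightarrow> y = v \<or> y = r"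
      using deg_eq_2E[OF s] qv by metis
    have qr: "adj E q r" using qn by simp
    have "deg V E r < 2"
      using mp2_local_max[OF s assms(3), of v q r] dv dq qv adj_commute[of E q v] qr by simp
    then have "deg V E r = 1" using adj_deg_pos[OF s] qr adj_commute[of E q r] by fastforce
    then obtain r' where "\<And>y. adj E r y \<longleftrightarrow> y = r'" using deg_eq_1E[OF s] by metis
    then have rn: "\<And>y. adj E r y \<Longrightarrow> y = q" using qr adj_commute[of E q r] by auto
    show False using closed[of "{v,q,r}" "{r}"] vq qn rn by auto
  qed
  moreover have "deg V E q \<ge> 1" using adj_deg_pos[OF s qv] .
  ultimately show ?thesis by linarith
qed

text \<open>Joining the leaf v at q to another local maximum b keeps q and b strict local maxima, so
  neither can be the middle vertex of a monotone path on three vertices; nor can v, whose new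
  degree 2 lies below those of q and b. Any other middle vertex sees only old edges, and old
  degrees except at b, whose extra degree does not matter as b lies above its neighbours.\<close>

lemma mp2_insert_edge_leaf_local_max:
  assumes s: "simple_graph V E" and mp: "mp V E \<le> 2"
    and vq: "\<And>y. adj E v y \<longleftrightarrow> y = q" and dv: "deg V E v = 1" and q3: "deg V E q \<ge> 3"
    and bV: "b \<in> V" and bq: "b \<noteq> q" and b2: "deg V E b \<ge> 2"
    and qmax: "\<And>y. adj E q y \<Longrightarrow> deg V E y < deg V E q"
    and bmax: "\<And>y. adj E b y \<Longrightarrow> deg V E y < deg V E b"
  shows "mp V (insert {v,b} E) \<le> 2"
proof -
  let ?E = "insert {v,b} E" and ?D = "deg V E"
  let ?D' = "deg V ?E"
  have vV: "v \<in> V" using adj_in_vertices[OF s, of v q] vq[of q] by simp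
  have bv: "b \<noteq> v" using b2 dv by auto
  have new: "\<not> adj E v b" using vq[of b] bq by simp
  have D': "?D' w = ?D w + (if w = v \<or> w = b then 1 else 0)" for w
    using deg_insert_edge[OF s vV bV bv[symmetric] new] .
  have nqb: "\<not> adj E q b" using qmax bmax adj_commute[of E q b] by fastforce
  have nqv: "q \<noteq> v" using vq[of v] adj_irrefl[OF s, of v] by auto
  have qmax': "?D' y < ?D' q" if "adj ?E q y" for y
    using that qmax[of y] D' nqb nqv bq q3 dv vq[of q] adj_commute[of E q]
    by (auto simp: adj_insert_edge)
  have bmax': "?D' y < ?D' b" if "adj ?E b y" for y
    using that bmax[of y] D' b2 dv bv bq vq[of b] adj_commute[of E b]
    by (auto simp: adj_insert_edge)
  have vn': "adj ?E v y \<longleftrightarrow> y = q \<or> y = b" for y using vq by (auto simp: adj_insert_edge)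
  show ?thesis
  proof (rule mp_le_2I[OF simple_graph_insert_edge[OF s vV bV bv[symmetric]]])
    fix x y z assume P: "is_path V ?E [x,y,z]" and M: "deg_monotone V ?E [x,y,z]"
    then have xy: "adj ?E y x" and yz: "adj ?E y z"
      using adj_commute[of ?E x y] by (auto simp: is_path_3)
    have not_peak: "\<not> (?D' x < ?D' y \<and> ?D' z < ?D' y)" using M by (auto simp: deg_monotone_3)
    have "y \<noteq> q" "y \<noteq> b"
      using not_peak qmax'[of x] qmax'[of z] bmax'[of x] bmax'[of z] xy yz by blast+
    moreover have "y \<noteq> v"
    proof
      assume "y = v"
      then have "{x,z} = {q,b}" using P vn' xy yz by (auto simp: is_path_3)
      then show False
        using M D' dv q3 b2 \<open>y = v\<close> nqv bv bq by (auto simp: deg_monotone_3 doubleton_eq_iff)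
    qed
    ultimately have old: "adj E y x" "adj E y z" "x \<noteq> v" "z \<noteq> v"
      using xy yz vq adj_commute[of E _ v] by (auto simp: adj_insert_edge)
    then have "is_path V E [x,y,z]" using P adj_commute[of E y x] by (auto simp: is_path_3)
    moreover have "deg_monotone V E [x,y,z]"
      using M D' \<open>y \<noteq> v\<close> \<open>y \<noteq> b\<close> old bmax[of y] adj_commute[of E b y] P
      by (cases "x = b"; cases "z = b") (auto simp: deg_monotone_3 is_path_3)
    ultimately show False using mp_le_2D[OF s mp] by blast
  qed
qed

text \<open>An edge avoiding the neighbour q of a leaf v has an endpoint of larger degree, a
  second local maximum; joining v to it would not increase mp.\<close>

lemma mp2_saturated_is_star:
  assumes s: "simple_graph V E" and c: "connected V E" and sat: "saturated V E"
    and "card E \<le> card V" and mp: "mp V E = 2"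
  obtains q where "q \<in> V" "E = {{q,l} | l. l \<in> V - {q}}"
proof -
  obtain v where vV: "v \<in> V" and dv: "deg V E v = 1" using mp2_has_leaf[OF assms(1,2,4,5)] by blast
  obtain q where qV: "q \<in> V" and vq: "\<And>y. adj E v y \<longleftrightarrow> y = q" using deg_eq_1E[OF s dv] by blast
  have through: "a = q \<or> b = q" if "adj E a b" for a b
  proof (rule ccontr)
    assume "\<not> (a = q \<or> b = q)"
    then have ab: "adj E a b" "a \<noteq> q" "b \<noteq> q" using that by auto
    then have q3: "deg V E q \<ge> 3"
      using mp2_leaf_neighbour_deg_ge_3[OF s c _ vq dv ab(1)] mp by simp
    have qmax: "deg V E y < deg V E q" if "adj E q y" for y
      using mp2_local_max[OF s _ _ _ that, of v] mp vq[of q] dv q3 adj_commute[of E v q] by simp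
    have "card {q,a,b} \<le> card V"
      using ab adj_in_vertices[OF s] qV s by (intro card_mono) (auto simp: simple_graph_def)
    moreover have "a \<noteq> b" using ab adj_irrefl[OF s, of a] by auto
    ultimately have "card V \<ge> 3" using ab(2,3) by auto
    then have "deg V E a \<noteq> deg V E b" using mp2_adjacent_degrees_differ[OF s c _ _ ab(1)] mp by simp
    then obtain a' b' where a'b': "adj E a' b'" "deg V E a' < deg V E b'" "b' \<noteq> q"
      using ab adj_commute[of E a b] by (metis linorder_neqE_nat)
    have bmax: "deg V E y < deg V E b'" if "adj E b' y" for y
      using mp2_local_max[OF s _ a'b'(1,2) that] mp by simp
    have b2: "deg V E b' \<ge> 2" using a'b'(2) adj_deg_pos[OF s a'b'(1)] by simp
    have b'V: "b' \<in> V" using adj_in_vertices[OF s a'b'(1)] by blast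
    have "mp V (insert {v,b'} E) \<le> 2"
      using mp2_insert_edge_leaf_local_max[OF s _ vq dv q3 b'V a'b'(3) b2 qmax bmax] mp by simp
    moreover have "b' \<noteq> v" using b2 dv by auto
    moreover have "\<not> adj E v b'" using vq[of b'] a'b'(3) by simp
    ultimately show False using saturated_mp_insert_edge[OF sat vV b'V] mp by simp
  qed
  have "card V \<ge> 2" using mp_le_card[OF s] mp by simp
  then have "E = {{q,l} | l. l \<in> V - {q}}"
    using connected_all_edges_through_is_star[OF s c _ qV through] by simp
  with qV show ?thesis by (rule that)
qed

lemma deg_monotone_4_peak_is_endpoint:
  assumes "is_path V E [a,b,c,d]" "deg_monotone V E [a,b,c,d]"
    and peak: "\<And>w. adj E y w \<Longrightarrow> deg V E w < deg V E y"
  shows "y \<noteq> b \<and> y \<noteq> c"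
proof -
  have "adj E b a" "adj E b c" "adj E c b" "adj E c d"
    using assms(1) adj_commute[of E a b] adj_commute[of E b c] by (auto simp: is_path_4)
  then have "y = b \<Longrightarrow> deg V E a < deg V E b \<and> deg V E c < deg V E b"
    "y = c \<Longrightarrow> deg V E b < deg V E c \<and> deg V E d < deg V E c"
    using peak by auto
  then show ?thesis using assms(2) by (auto simp: deg_monotone_4)
qed

lemma monotone_path_4_from_endpoint:
  assumes "is_path V E [a,b,c,d]" "deg_monotone V E [a,b,c,d]" "w = a \<or> w = d"
    and from_w: "\<And>b c d. is_path V E [w,b,c,d] \<Longrightarrow> deg_monotone V E [w,b,c,d] \<Longrightarrow> False"
  shows False
  using assms from_w[of c b a] is_path_rev[of V E "[a,b,c,d]"] deg_monotone_rev[of V E "[a,b,c,d]"]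
  by auto

lemma is_path_4_trapped:
  assumes P: "is_path V E [a,b,c,d]" and "finite S" "card S \<le> 3"
    and closed: "\<And>x y. x \<in> S \<Longrightarrow> adj E x y \<Longrightarrow> y \<in> S \<or> y \<in> R"
    and avoid: "R \<inter> {a,b,c,d} = {}"
  shows "S \<inter> {a,b,c,d} = {}"
proof (rule ccontr)
  assume "S \<inter> {a,b,c,d} \<noteq> {}"
  moreover have "x \<in> S \<longleftrightarrow> y \<in> S" if "adj E x y" "y \<notin> R" "x \<notin> R" for x y
    using closed[of x y] closed[of y x] that adj_commute[of E x y] by blast
  ultimately have "{a,b,c,d} \<subseteq> S" using P avoid by (auto simp: is_path_4)
  then have "card {a,b,c,d} \<le> 3" using assms(2,3) card_mono by (metis le_trans)
  then show False using P by (simp add: is_path_4)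
qed

lemma mp3_insert_edge_monotone_path_meets_edge:
  assumes s: "simple_graph V E" and "mp V E \<le> 3" and "u \<in> V" "x \<in> V" "u \<noteq> x" "\<not> adj E u x"
    and "is_path V (insert {u,x} E) [a,b,c,d]" "deg_monotone V (insert {u,x} E) [a,b,c,d]"
  shows "u \<in> {a,b,c,d} \<or> x \<in> {a,b,c,d}"
  using monotone_path_avoiding_insert_edge[OF s assms(3-8)] mp_le_3D[OF s assms(2)] by auto

lemma mp3_pendant_path_local_max:
  assumes s: "simple_graph V E" and mp: "mp V E \<le> 3"
    and vq: "\<And>y. adj E v y \<longleftrightarrow> y = q" and qn: "\<And>y. adj E q y \<longleftrightarrow> y = v \<or> y = r"
    and rv: "r \<noteq> v" and dv: "deg V E v = 1" and dq: "deg V E q = 2"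
    and "adj E r y" "y \<noteq> q"
  shows "deg V E y < deg V E r"
proof -
  have vV: "v \<in> V" and qV: "q \<in> V" and rV: "r \<in> V"
    using adj_in_vertices[OF s, of v q] adj_in_vertices[OF s, of q r] vq[of q] qn[of r] by auto
  have rq: "adj E r q" using qn[of r] adj_commute[of E q r] by simp
  have "y \<noteq> v" "y \<noteq> r" "y \<in> V" "v \<noteq> q" "r \<noteq> q"
    using assms(8,9) vq[of r] vq[of v] qn[of q] adj_commute[of E r v] adj_irrefl[OF s]
      adj_in_vertices[OF s] rv by auto
  then have "is_path V E [v,q,r,y]"
    using vV qV rV rv assms(8,9) vq[of q] qn[of r] by (auto simp: is_path_4)
  moreover have "card {q,y} \<le> deg V E r"
    using \<open>y \<in> V\<close> qV rq assms(8) by (intro deg_ge_card_neighbours[OF s]) auto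
  ultimately show ?thesis
    using mp_le_3D[OF s mp, of v q r y] dv dq assms(9) by (auto simp: deg_monotone_4)
qed

text \<open>Closing the pendant path v, q, r to a triangle makes r a strict local maximum, unless r
  was a leaf and the triangle is a component of its own. So a monotone path on four vertices
  starts at r and leaves the triangle at once, after which it uses old edges and old degrees
  only.\<close>

lemma mp3_insert_edge_leaf_second_neighbour:
  assumes s: "simple_graph V E" and mp: "mp V E \<le> 3"
    and vq: "\<And>y. adj E v y \<longleftrightarrow> y = q" and qn: "\<And>y. adj E q y \<longleftrightarrow> y = v \<or> y = r"
    and rv: "r \<noteq> v" and dv: "deg V E v = 1" and dq: "deg V E q = 2"
  shows "mp V (insert {v,r} E) \<le> 3"
proof -
  let ?E = "insert {v,r} E" and ?D = "deg V E"
  let ?D' = "deg V ?E"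
  have vV: "v \<in> V" and rV: "r \<in> V"
    using adj_in_vertices[OF s, of v q] adj_in_vertices[OF s, of q r] vq[of q] qn[of r] by auto
  have rq: "r \<noteq> q" using adj_irrefl[OF s, of q] qn[of q] by auto
  have new: "\<not> adj E v r" using vq[of r] rq by simp
  have D': "?D' w = ?D w + (if w = v \<or> w = r then 1 else 0)" for w
    using deg_insert_edge[OF s vV rV rv[symmetric] new] .
  have rq_adj: "adj E r q" using qn[of r] adj_commute[of E q r] by simp
  note below_r = mp3_pendant_path_local_max[OF s mp vq qn rv dv dq]
  have triangle: "y \<in> {v,q,r}" if "x \<in> {v,q}" "adj ?E x y" for x y
    using that vq qn by (auto simp: adj_insert_edge)
  show ?thesis
  proof (rule mp_le_3I[OF simple_graph_insert_edge[OF s vV rV rv[symmetric]]])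
    fix a b c d assume P: "is_path V ?E [a,b,c,d]" and M: "deg_monotone V ?E [a,b,c,d]"
    have "r \<in> {a,b,c,d}"
    proof (rule ccontr)
      assume "r \<notin> {a,b,c,d}"
      moreover have "card {v,q} \<le> 3" by (simp add: card_insert_if)
      ultimately have "v \<notin> {a,b,c,d}"
        using is_path_4_trapped[OF P, of "{v,q}" "{r}"] triangle by auto
      then show False using mp3_insert_edge_monotone_path_meets_edge[OF s mp vV rV _ new P M] rv
        \<open>r \<notin> {a,b,c,d}\<close> by auto
    qed
    show False
    proof (cases "?D r = 1")
      case True
      then have "adj E r y \<Longrightarrow> y = q" for y
        using deg_eq_1E[OF s True] rq_adj by metis
      then have "y \<in> {v,q,r}" if "x \<in> {v,q,r}" "adj ?E x y" for x y
        using that triangle by (auto simp: adj_insert_edge)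
      moreover have "card {v,q,r} \<le> 3" by (simp add: card_insert_if)
      ultimately show False using is_path_4_trapped[OF P, of "{v,q,r}" "{}"] \<open>r \<in> {a,b,c,d}\<close>
        by blast
    next
      case False
      then have "?D' r \<ge> 3" using D' adj_deg_pos[OF s rq_adj] by simp
      then have peak: "?D' y < ?D' r" if "adj ?E r y" for y
        using that D' dv dq below_r[of y] rv rq by (cases "y = q") (auto simp: adj_insert_edge)
      have from_r: False if P': "is_path V ?E [r,y,z,t]" and M': "deg_monotone V ?E [r,y,z,t]"
        for y z t
      proof -
        have out: "y \<notin> {v,q}" "z \<notin> {v,q}" "t \<notin> {v,q}"
          using P' triangle[of y z] triangle[of z t] triangle[of z y] triangle[of t z]
            adj_commute[of ?E y z] adj_commute[of ?E z t] by (auto simp: is_path_4)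
        then have old: "is_path V E [r,y,z,t]"
          using P' by (auto simp: is_path_4 adj_insert_edge)
        have "?D' y < ?D' r" using peak P' by (simp add: is_path_4)
        moreover have "?D y < ?D r" using below_r old out by (simp add: is_path_4)
        ultimately have "deg_monotone V E [r,y,z,t]"
          using M' D' out P' by (auto simp: deg_monotone_4 is_path_4)
        then show False using mp_le_3D[OF s mp old] by blast
      qed
      have "r = a \<or> r = d"
        using deg_monotone_4_peak_is_endpoint[OF P M peak] \<open>r \<in> {a,b,c,d}\<close> by auto
      then show False using monotone_path_4_from_endpoint[OF P M] from_r by blast
    qed
  qed
qed

text \<open>Joining a leaf v to a vertex x of maximum degree makes x the unique vertex of maximum
  degree, so x can only be an endpoint of a monotone path; a monotone path starting at x and
  avoiding the new edge is already monotone in the old graph, since x had maximum degree there.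
  A monotone path through v but not x starts v, q, and is increasing because the degree of q is
  at least 3.\<close>

lemma mp3_insert_edge_leaf_max_degree:
  assumes s: "simple_graph V E" and mp: "mp V E \<le> 3"
    and vq: "\<And>y. adj E v y \<longleftrightarrow> y = q" and dv: "deg V E v = 1" and q3: "deg V E q \<ge> 3"
    and xV: "x \<in> V" and xv: "x \<noteq> v" and xq: "x \<noteq> q"
    and xmax: "\<And>y. y \<in> V \<Longrightarrow> deg V E y \<le> deg V E x"
  shows "mp V (insert {v,x} E) \<le> 3"
proof -
  let ?E = "insert {v,x} E" and ?D = "deg V E"
  let ?D' = "deg V ?E"
  have vV: "v \<in> V" and qV: "q \<in> V" using adj_in_vertices[OF s, of v q] vq[of q] by auto
  have new: "\<not> adj E v x" using vq[of x] xq by simp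
  have D': "?D' w = ?D w + (if w = v \<or> w = x then 1 else 0)" for w
    using deg_insert_edge[OF s vV xV xv[symmetric] new] .
  have qv: "q \<noteq> v" using vq[of v] adj_irrefl[OF s, of v] by auto
  have x3: "?D x \<ge> 3" using xmax[OF qV] q3 by simp
  have peak: "?D' y < ?D' x" if "adj ?E x y" for y
    using adj_in_vertices[OF simple_graph_insert_edge[OF s vV xV xv[symmetric]] that]
      adj_irrefl[OF simple_graph_insert_edge[OF s vV xV xv[symmetric]], of x] that
      xmax[of y] x3 D'[of y] D'[of x] dv
    by (cases "y = v") auto
  have vn': "adj ?E v y \<longleftrightarrow> y = q \<or> y = x" for y using vq by (auto simp: adj_insert_edge)
  have from_x: False if P: "is_path V ?E [x,b,c,d]" and M: "deg_monotone V ?E [x,b,c,d]" for b c d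
  proof -
    have dec: "?D' x \<ge> ?D' b \<and> ?D' b \<ge> ?D' c \<and> ?D' c \<ge> ?D' d"
      using M peak[of b] P by (auto simp: deg_monotone_4 is_path_4)
    have "b \<noteq> v"
    proof
      assume "b = v"
      then have "c = q" using P vn'[of c] by (auto simp: is_path_4)
      then show False using dec D' \<open>b = v\<close> dv q3 qv xq by auto
    qed
    moreover have "c \<noteq> v"
      using P vn'[of b] vn'[of d] adj_commute[of ?E b v] \<open>b \<noteq> v\<close> by (auto simp: is_path_4)
    ultimately have "is_path V E [x,b,c,d]"
      using P by (auto simp: is_path_4 adj_insert_edge)
    moreover have "deg_monotone V E [x,b,c,d]"
      using dec D' \<open>b \<noteq> v\<close> \<open>c \<noteq> v\<close> xmax[of b] P
      by (auto simp: deg_monotone_4 is_path_4 split: if_splits)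
    ultimately show False using mp_le_3D[OF s mp] by blast
  qed
  have from_v: False
    if P: "is_path V ?E [v,b,c,d]" and M: "deg_monotone V ?E [v,b,c,d]" and "x \<notin> {b,c,d}"
    for b c d
  proof -
    have "b = q" using P vn'[of b] that(3) by (auto simp: is_path_4)
    then have "is_path V E [v,b,c,d]"
      using P that(3) vq[of q] by (auto simp: is_path_4 adj_insert_edge)
    moreover have "deg_monotone V E [v,b,c,d]"
      using M D' \<open>b = q\<close> dv q3 qv xq that(3) P by (auto simp: deg_monotone_4 is_path_4)
    ultimately show False using mp_le_3D[OF s mp] by blast
  qed
  show ?thesis
  proof (rule mp_le_3I[OF simple_graph_insert_edge[OF s vV xV xv[symmetric]]])
    fix a b c d assume P: "is_path V ?E [a,b,c,d]" and M: "deg_monotone V ?E [a,b,c,d]"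
    consider "x \<in> {a,b,c,d}" | "x \<notin> {a,b,c,d}" "v \<in> {a,b,c,d}" | "x \<notin> {a,b,c,d}" "v \<notin> {a,b,c,d}"
      by blast
    then show False
    proof cases
      case 1
      then have "x = a \<or> x = d" using deg_monotone_4_peak_is_endpoint[OF P M peak] by auto
      then show False using monotone_path_4_from_endpoint[OF P M] from_x by blast
    next
      case 2
      then have "v = a \<or> v = d"
        using P vn' adj_commute[of ?E _ v] by (auto simp: is_path_4)
      then show False
        using from_v[of b c d] from_v[of c b a] P M 2(1) is_path_rev[of V ?E "[a,b,c,d]"]
          deg_monotone_rev[of V ?E "[a,b,c,d]"]
        by auto
    next
      case 3
      then show False
        using mp3_insert_edge_monotone_path_meets_edge[OF s mp vV xV _ new P M] xv by auto
    qed
  qed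
qed

text \<open>Joining two leaves v, w at q creates a triangle that a path on four vertices can only
  enter through q. As q stays the unique vertex of maximum degree, it is an endpoint of a
  monotone path; from q the path either stays in the triangle, which is too small, or avoids
  v and w altogether and lives in the old graph.\<close>

lemma mp3_insert_edge_two_leaves:
  assumes s: "simple_graph V E" and mp: "mp V E \<le> 3"
    and vq: "\<And>y. adj E v y \<longleftrightarrow> y = q" and wq: "\<And>y. adj E w y \<longleftrightarrow> y = q" and vw: "v \<noteq> w"
    and dv: "deg V E v = 1" and dw: "deg V E w = 1" and q3: "deg V E q \<ge> 3"
    and qmax: "\<And>y. y \<in> V \<Longrightarrow> y \<noteq> q \<Longrightarrow> deg V E y < deg V E q"
  shows "mp V (insert {v,w} E) \<le> 3"
proof -
  let ?E = "insert {v,w} E" and ?D = "deg V E"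
  let ?D' = "deg V ?E"
  have vV: "v \<in> V" and wV: "w \<in> V"
    using adj_in_vertices[OF s, of v q] adj_in_vertices[OF s, of w q] vq[of q] wq[of q] by auto
  have qv: "q \<noteq> v" and qw: "q \<noteq> w"
    using vq[of v] wq[of w] adj_irrefl[OF s, of v] adj_irrefl[OF s, of w] by auto
  have new: "\<not> adj E v w" using vq[of w] qw by simp
  have s': "simple_graph V ?E" using simple_graph_insert_edge[OF s vV wV vw] .
  have D': "?D' y = ?D y + (if y = v \<or> y = w then 1 else 0)" for y
    using deg_insert_edge[OF s vV wV vw new] .
  have peak: "?D' y < ?D' q" if "adj ?E q y" for y
    using adj_in_vertices[OF s' that] adj_irrefl[OF s', of q] that qmax[of y] D'[of y] D'[of q]
      dv dw q3 qv qw
    by (cases "y = v \<or> y = w") auto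
  have triangle: "y \<in> {v,w,q}" if "x \<in> {v,w}" "adj ?E x y" for x y
    using that vq wq by (auto simp: adj_insert_edge)
  note meets = mp3_insert_edge_monotone_path_meets_edge[OF s mp vV wV vw new]
  have from_q: False if P: "is_path V ?E [q,b,c,d]" and M: "deg_monotone V ?E [q,b,c,d]" for b c d
  proof (cases "b \<in> {v,w}")
    case True
    then have "c \<in> {v,w}" using P triangle[of b c] by (auto simp: is_path_4)
    then show False using P triangle[of c d] True by (auto simp: is_path_4)
  next
    case False
    then have "c \<notin> {v,w}" "d \<notin> {v,w}"
      using P triangle[of c b] triangle[of d c] adj_commute[of ?E b c] adj_commute[of ?E c d]
      by (auto simp: is_path_4)
    then show False using meets[OF P M] False qv qw by auto
  qed
  show ?thesis
  proof (rule mp_le_3I[OF s'])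
    fix a b c d assume P: "is_path V ?E [a,b,c,d]" and M: "deg_monotone V ?E [a,b,c,d]"
    show False
    proof (cases "q \<in> {a,b,c,d}")
      case True
      then have "q = a \<or> q = d" using deg_monotone_4_peak_is_endpoint[OF P M peak] by auto
      then show False using monotone_path_4_from_endpoint[OF P M] from_q by blast
    next
      case False
      moreover have "card {v,w} \<le> 3" by (simp add: card_insert_if)
      ultimately have "{v,w} \<inter> {a,b,c,d} = {}"
        using is_path_4_trapped[OF P, of "{v,w}" "{q}"] triangle by auto
      then show False using meets[OF P M] by auto
    qed
  qed
qed

text \<open>After joining the leaf v of the paw to a, the degrees are 2, 3, 3, 2 at v, q, a, b, so a
  monotone path through all four vertices would have to start or end with the non-adjacent
  vertices v and b.\<close>

lemma paw_insert_edge_mp: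
  assumes s: "simple_graph V E" and V: "V = {v,q,a,b}"
    and vq: "\<And>y. adj E v y \<longleftrightarrow> y = q" and bq: "\<And>y. adj E b y \<longleftrightarrow> y = q \<or> y = a"
    and "v \<noteq> a" "v \<noteq> b" "q \<noteq> a" "q \<noteq> b" "a \<noteq> b"
    and dv: "deg V E v = 1" and dq: "deg V E q = 3" and da: "deg V E a = 2" and db: "deg V E b = 2"
  shows "mp V (insert {v,a} E) \<le> 3"
proof -
  let ?E = "insert {v,a} E"
  have new: "\<not> adj E v a" using vq[of a] assms(7) by simp
  have D': "deg V ?E y = deg V E y + (if y = v \<or> y = a then 1 else 0)" for y
    using deg_insert_edge[OF s _ _ assms(5) new] V by auto
  have "deg V ?E v = 2" "deg V ?E q = 3" "deg V ?E a = 3" "deg V ?E b = 2"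
    using D' dv dq da db assms(5-9) by auto
  moreover have "\<not> adj ?E v b" "\<not> adj ?E b v"
    using vq[of b] vq[of v] bq[of v] adj_irrefl[OF s, of v] assms(5,6,8,9)
    by (auto simp: adj_insert_edge)
  ultimately show ?thesis
    using V by (intro mp_le_3I[OF simple_graph_insert_edge[OF s _ _ assms(5)]])
      (auto simp: is_path_4 deg_monotone_4)
qed

lemma mp3_2_regular_is_K3:
  assumes s: "simple_graph V E" and c: "connected V E" and mp: "mp V E \<le> 3"
    and reg: "\<And>y. y \<in> V \<Longrightarrow> deg V E y = 2" and "V \<noteq> {}"
  shows "is_K3 V E"
proof -
  obtain a where aV: "a \<in> V" using \<open>V \<noteq> {}\<close> by blast
  then obtain b c where bc: "b \<in> V" "c \<in> V" "b \<noteq> c" and an: "\<And>y. adj E a y \<longleftrightarrow> y = b \<or> y = c"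
    using deg_eq_2E[OF s] reg by metis
  have ab: "a \<noteq> b" "a \<noteq> c" using an[of a] adj_irrefl[OF s, of a] by auto
  obtain b' where "b' \<noteq> a" and bn: "\<And>y. adj E b y \<longleftrightarrow> y = a \<or> y = b'"
    using deg_eq_2_otherE[OF s reg[OF bc(1)], of a] an[of b] adj_commute[of E a b] by auto
  have "b' = c"
  proof (rule ccontr)
    assume "b' \<noteq> c"
    moreover have "b' \<in> V" "b' \<noteq> b"
      using bn[of b'] adj_in_vertices[OF s, of b b'] adj_irrefl[OF s, of b] by auto
    ultimately have "is_path V E [c,a,b,b']"
      using bc aV ab \<open>b' \<noteq> a\<close> an[of c] an[of b] bn[of b'] adj_commute[of E a c]
      by (auto simp: is_path_4)
    moreover have "deg_monotone V E [c,a,b,b']"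
      using reg bc aV \<open>b' \<in> V\<close> by (simp add: deg_monotone_4)
    ultimately show False using mp_le_3D[OF s mp] by blast
  qed
  obtain c' where "c' \<noteq> a" and cn: "\<And>y. adj E c y \<longleftrightarrow> y = a \<or> y = c'"
    using deg_eq_2_otherE[OF s reg[OF bc(2)], of a] an[of c] adj_commute[of E a c] by auto
  then have cn: "\<And>y. adj E c y \<longleftrightarrow> y = a \<or> y = b"
    using bn[of c] \<open>b' = c\<close> adj_commute[of E b c] ab by metis
  have "V \<subseteq> {a,b,c}"
    using connected_closed_superset[OF c, of a "{a,b,c}"] aV an bn cn \<open>b' = c\<close> by auto
  then have V: "V = {a,b,c}" using aV bc by auto
  have "E = {e. e \<subseteq> V \<and> card e = 2}"
  proof
    show "E \<subseteq> {e. e \<subseteq> V \<and> card e = 2}" using s by (auto simp: simple_graph_def)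
    show "{e. e \<subseteq> V \<and> card e = 2} \<subseteq> E"
    proof
      fix e assume "e \<in> {e. e \<subseteq> V \<and> card e = 2}"
      then obtain x y where "e = {x,y}" "x \<noteq> y" "{x,y} \<subseteq> {a,b,c}" using V by (auto simp: card_2_iff)
      then show "e \<in> E" using an[of y] bn[of y] cn[of y] \<open>b' = c\<close> by (auto simp: adj_def)
    qed
  qed
  then show ?thesis using V ab bc by (simp add: is_K3_def)
qed

lemma mp3_saturated_leaf_neighbour_deg_ge_3:
  assumes s: "simple_graph V E" and c: "connected V E" and sat: "saturated V E"
    and mp: "mp V E = 3" and vq: "\<And>y. adj E v y \<longleftrightarrow> y = q" and dv: "deg V E v = 1"
  shows "deg V E q \<ge> 3"
proof -
  have vV: "v \<in> V" and qv: "adj E q v"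
    using adj_in_vertices[OF s, of v q] vq[of q] adj_commute[of E v q] by auto
  have "deg V E q \<noteq> 1"
  proof
    assume "deg V E q = 1"
    then have "adj E q y \<Longrightarrow> y = v" for y using deg_eq_1E[OF s] qv by metis
    then have "V \<subseteq> {v,q}" using connected_closed_superset[OF c, of v "{v,q}"] vV vq by auto
    then show False using mp_le_card[OF s] mp card_mono[of "{v,q}" V]
      by (auto simp: card_insert_if split: if_splits)
  qed
  moreover have "deg V E q \<noteq> 2"
  proof
    assume dq: "deg V E q = 2"
    then obtain r where "r \<noteq> v" and qn: "\<And>y. adj E q y \<longleftrightarrow> y = v \<or> y = r"
      using deg_eq_2_otherE[OF s _ qv] by metis
    have rV: "r \<in> V" using adj_in_vertices[OF s, of q r] qn[of r] by auto
    have "\<not> adj E v r" using vq[of r] qn[of q] adj_irrefl[OF s, of q] by auto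
    then have "mp V E < mp V (insert {v,r} E)"
      using saturated_mp_insert_edge[OF sat vV rV] \<open>r \<noteq> v\<close> by auto
    then show False
      using mp3_insert_edge_leaf_second_neighbour[OF s _ vq qn \<open>r \<noteq> v\<close> dv dq] mp by simp
  qed
  moreover have "deg V E q \<ge> 1" using adj_deg_pos[OF s qv] .
  ultimately show ?thesis by linarith
qed

text \<open>If every vertex other than the leaf v and its neighbour q of degree 3 has degree 2, the
  two other neighbours a, b of q must be adjacent: otherwise the path q, a, a', a'' leaving the
  neighbourhood of q has degrees 3, 2, 2, 2.\<close>

lemma mp3_unique_leaf_is_paw:
  assumes s: "simple_graph V E" and c: "connected V E" and mp: "mp V E \<le> 3"
    and vq: "\<And>y. adj E v y \<longleftrightarrow> y = q" and dq: "deg V E q = 3"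
    and d2: "\<And>y. y \<in> V \<Longrightarrow> y \<noteq> v \<Longrightarrow> y \<noteq> q \<Longrightarrow> deg V E y = 2"
  obtains a b where "V = {v,q,a,b}" "v \<noteq> a" "v \<noteq> b" "q \<noteq> a" "q \<noteq> b" "a \<noteq> b"
    "\<And>y. adj E b y \<longleftrightarrow> y = q \<or> y = a"
proof -
  have "adj E v q" using vq[of q] by simp
  then have vV: "v \<in> V" and qV: "q \<in> V" and qv: "adj E q v"
    using adj_in_vertices[OF s] adj_commute[of E v q] by blast+
  have vq': "v \<noteq> q" using vq[of v] adj_irrefl[OF s, of v] by auto
  obtain a b where ab: "a \<in> V" "b \<in> V" "a \<noteq> b" "a \<noteq> v" "b \<noteq> v"
    and qn: "\<And>y. adj E q y \<longleftrightarrow> y = v \<or> y = a \<or> y = b"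
  proof -
    obtain x y z where xyz: "x \<in> V" "y \<in> V" "z \<in> V" "x \<noteq> y" "y \<noteq> z" "x \<noteq> z"
      and n: "\<And>w. adj E q w \<longleftrightarrow> w = x \<or> w = y \<or> w = z"
      using deg_eq_3E[OF s dq] by blast
    have "v = x \<or> v = y \<or> v = z" using n[of v] qv by simp
    then show ?thesis
    proof (elim disjE)
      assume "v = x" then show ?thesis using xyz by (intro that[of y z]) (auto simp: n)
    next
      assume "v = y" then show ?thesis using xyz by (intro that[of x z]) (auto simp: n)
    next
      assume "v = z" then show ?thesis using xyz by (intro that[of x y]) (auto simp: n)
    qed
  qed
  have aq: "a \<noteq> q" "b \<noteq> q" using qn[of a] qn[of b] adj_irrefl[OF s, of q] by auto
  have partner: "adj E u y \<longleftrightarrow> y = q \<or> y = u'" if "{u,u'} = {a,b}" for u u' y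
  proof -
    have u: "u \<in> V" "u \<noteq> v" "u \<noteq> q" "u' \<noteq> u" "adj E u q" "adj E q u'"
      using that ab aq qn[of u] qn[of u'] adj_commute[of E q u] by (auto simp: doubleton_eq_iff)
    obtain u2 where "u2 \<noteq> q" and un: "\<And>y. adj E u y \<longleftrightarrow> y = q \<or> y = u2"
      using deg_eq_2_otherE[OF s d2[OF u(1-3)] u(5)] by metis
    have "u2 = u'"
    proof (rule ccontr)
      assume "u2 \<noteq> u'"
      have u2: "u2 \<in> V" "u2 \<noteq> u" "u2 \<noteq> v" "\<not> adj E q u2"
        using un[of u2] adj_in_vertices[OF s, of u u2] adj_irrefl[OF s, of u] vq[of u]
          adj_commute[of E u v] u qn[of u2] \<open>u2 \<noteq> u'\<close> that by (auto simp: doubleton_eq_iff)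
      obtain u3 where "u3 \<noteq> u" and u2n: "\<And>y. adj E u2 y \<longleftrightarrow> y = u \<or> y = u3"
        using deg_eq_2_otherE[OF s d2[OF u2(1,3)] _, of u] \<open>u2 \<noteq> q\<close> un[of u2]
          adj_commute[of E u u2] by metis
      have u3: "u3 \<in> V" "u3 \<noteq> u2" "u3 \<noteq> q" "u3 \<noteq> v"
        using u2n[of u3] adj_in_vertices[OF s, of u2 u3] adj_irrefl[OF s, of u2] u2(4)
          adj_commute[of E u2 q] vq[of u2] adj_commute[of E u2 v] \<open>u2 \<noteq> q\<close> by auto
      have "is_path V E [q,u,u2,u3]"
        using qV u u2 u3 \<open>u2 \<noteq> q\<close> \<open>u3 \<noteq> u\<close> un[of u2] u2n[of u3] adj_commute[of E q u]
        by (auto simp: is_path_4)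
      moreover have "deg_monotone V E [q,u,u2,u3]"
        using dq d2 u u2 u3 \<open>u2 \<noteq> q\<close> by (simp add: deg_monotone_4)
      ultimately show False using mp_le_3D[OF s mp] by blast
    qed
    then show ?thesis using un by simp
  qed
  have "y \<in> {v,q,a,b}" if "x \<in> {v,q,a,b}" "adj E x y" for x y
    using that vq[of y] qn[of y] partner[of a b y] partner[of b a y] by (auto simp: insert_commute)
  then have "V \<subseteq> {v,q,a,b}" using connected_closed_superset[OF c, of v "{v,q,a,b}"] vV by blast
  then have "V = {v,q,a,b}" using vV qV ab by auto
  moreover have "adj E b y \<longleftrightarrow> y = q \<or> y = a" for y
    using partner[of b a y] by (simp add: insert_commute)
  ultimately show ?thesis using that ab aq vq' by blast
qed

lemma mp3_saturated_leaf_adj_max_degree: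
  assumes s: "simple_graph V E" and c: "connected V E" and sat: "saturated V E"
    and mp: "mp V E = 3" and vV: "v \<in> V" and dv: "deg V E v = 1"
    and xV: "x \<in> V" and xmax: "\<And>y. y \<in> V \<Longrightarrow> deg V E y \<le> deg V E x"
  shows "adj E v x"
proof (rule ccontr)
  assume new: "\<not> adj E v x"
  obtain q where vq: "\<And>y. adj E v y \<longleftrightarrow> y = q" using deg_eq_1E[OF s dv] by metis
  have q3: "deg V E q \<ge> 3"
    using mp3_saturated_leaf_neighbour_deg_ge_3[OF s c sat mp vq dv] .
  then have "x \<noteq> v" "x \<noteq> q"
    using xmax adj_in_vertices[OF s, of v q] vq[of q] dv new vq[of x] by fastforce+
  then have "mp V (insert {v,x} E) \<le> 3"
    using mp3_insert_edge_leaf_max_degree[OF s _ vq dv q3 xV _ _ xmax] mp by simp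
  then show False using saturated_mp_insert_edge[OF sat vV xV _ new] \<open>x \<noteq> v\<close> mp by simp
qed

lemma mp3_saturated_no_leaf:
  assumes s: "simple_graph V E" and c: "connected V E" and sat: "saturated V E"
    and m: "card E \<le> card V" and mp: "mp V E = 3" and vV: "v \<in> V"
  shows "deg V E v \<noteq> 1"
proof
  assume dv: "deg V E v = 1"
  obtain q where qV: "q \<in> V" and vq: "\<And>y. adj E v y \<longleftrightarrow> y = q" using deg_eq_1E[OF s dv] by blast
  have q3: "deg V E q \<ge> 3" using mp3_saturated_leaf_neighbour_deg_ge_3[OF s c sat mp vq dv] .
  have fV: "finite V" using s by (simp add: simple_graph_def)
  obtain x where xV: "x \<in> V" and "deg V E x = Max (deg V E ` V)"
    using Max_in[of "deg V E ` V"] fV vV by fastforce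
  then have xmax: "\<And>y. y \<in> V \<Longrightarrow> deg V E y \<le> deg V E x" using fV by simp
  have "x = q" using mp3_saturated_leaf_adj_max_degree[OF s c sat mp vV dv xV xmax] vq by simp
  have qmax: "deg V E y < deg V E q" if "y \<in> V" "y \<noteq> q" for y
  proof (rule ccontr)
    assume "\<not> deg V E y < deg V E q"
    then have "\<And>z. z \<in> V \<Longrightarrow> deg V E z \<le> deg V E y" using xmax \<open>x = q\<close> by fastforce
    then show False
      using mp3_saturated_leaf_adj_max_degree[OF s c sat mp vV dv that(1)] vq[of y] that(2) by simp
  qed
  have leaf_at_q: "\<And>y. adj E w y \<longleftrightarrow> y = q" if "w \<in> V" "deg V E w = 1" for w
  proof -
    have "adj E w q"
      using mp3_saturated_leaf_adj_max_degree[OF s c sat mp that qV] xmax \<open>x = q\<close> by simp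
    then show "\<And>y. adj E w y \<longleftrightarrow> y = q" using deg_eq_1E[OF s that(2)] by metis
  qed
  have unique_leaf: "w = v" if "w \<in> V" "deg V E w = 1" for w
  proof (rule ccontr)
    assume "w \<noteq> v"
    then have "mp V (insert {v,w} E) \<le> 3"
      using mp3_insert_edge_two_leaves[OF s _ vq leaf_at_q[OF that] _ dv that(2) q3 qmax] mp by simp
    moreover have "\<not> adj E v w"
      using vq[of w] leaf_at_q[OF that, of w] adj_irrefl[OF s, of w] by auto
    ultimately show False using saturated_mp_insert_edge[OF sat vV that(1)] \<open>w \<noteq> v\<close> mp by simp
  qed
  have dq: "deg V E q = 3" and d2: "\<And>y. y \<in> V \<Longrightarrow> y \<noteq> v \<Longrightarrow> y \<noteq> q \<Longrightarrow> deg V E y = 2"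
    using degrees_unique_leaf[OF s c m vV dv unique_leaf qV q3] by blast+
  obtain a b where paw: "V = {v,q,a,b}" "v \<noteq> a" "v \<noteq> b" "q \<noteq> a" "q \<noteq> b" "a \<noteq> b"
    and bn: "\<And>y. adj E b y \<longleftrightarrow> y = q \<or> y = a"
    using mp3_unique_leaf_is_paw[OF s c _ vq dq d2] mp by auto
  have "mp V (insert {v,a} E) \<le> 3"
    using paw_insert_edge_mp[OF s paw(1) vq bn paw(2-6) dv dq] d2 paw by simp
  moreover have "\<not> adj E v a" using vq[of a] paw(4) by simp
  ultimately show False using saturated_mp_insert_edge[OF sat vV _ paw(2)] paw(1) mp by simp
qed

theorem lemma3p2:
  fixes V :: "'a set" and E :: "'a set set"
  assumes "simple_graph V E" and "connected V E" and "saturated V E"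
    and "card E \<le> card V" and "2 \<le> mp V E" and "mp V E \<le> 3"
  shows "(mp V E = 2 \<longrightarrow>
            (\<exists>d\<ge>1. is_star V E d \<and>
               (d \<ge> 2 \<longrightarrow> (\<forall>u\<in>V. \<forall>v\<in>V. u \<noteq> v \<and> {u, v} \<notin> E \<longrightarrow>
                                mp V (insert {u, v} E) = 3))))
       \<and> (mp V E = 3 \<longrightarrow> is_K3 V E)"
proof (intro conjI impI)
  assume mp: "mp V E = 2"
  obtain q where qV: "q \<in> V" and star: "E = {{q,l} | l. l \<in> V - {q}}"
    using mp2_saturated_is_star[OF assms(1-4) mp] .
  have "card V \<ge> 2" using mp_le_card[OF assms(1)] mp by simp
  then have "card (V - {q}) \<ge> 1" using qV by (simp add: card_Diff_singleton)
  moreover have "is_star V E (card (V - {q}))" using qV star by (auto simp: is_star_def)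
  ultimately show "\<exists>d\<ge>1. is_star V E d \<and> (d \<ge> 2 \<longrightarrow> (\<forall>u\<in>V. \<forall>v\<in>V. u \<noteq> v \<and> {u, v} \<notin> E \<longrightarrow>
                                mp V (insert {u, v} E) = 3))"
    using star_insert_edge_mp[OF assms(1) qV star] by (auto simp: adj_def)
next
  assume mp: "mp V E = 3"
  have "card V \<ge> 3" using mp_le_card[OF assms(1)] mp by simp
  then have "\<forall>y\<in>V. deg V E y = 2"
    using leaf_or_2_regular[OF assms(1,2,4)] mp3_saturated_no_leaf[OF assms(1-4) mp] by auto
  moreover have "V \<noteq> {}" using \<open>card V \<ge> 3\<close> by auto
  ultimately show "is_K3 V E" using mp3_2_regular_is_K3[OF assms(1,2)] mp by simp
qed

end
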